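(* Let $\mathscr{H}$ be a complex Hilbert space and let $T$ be a Hilbert–Schmidt operator on $\mathscr{H}$. Then $$w_2^2(T)\leq\frac12\|T\|_2^2+\frac12|\mathrm{tr}(T^2)|.$$
   Context: An operator $T$ on $\mathscr{H}$ is Hilbert–Schmidt if $\sum_i\|Te_i\|^2<\infty$ for some (equivalently every) orthonormal basis $\{e_i\}$; its Hilbert–Schmidt norm is $\|T\|_2=(\mathrm{tr}(T^*T))^{1/2}$. $\Re(T)=\frac12(T+T^* )$ and $w_2(T)=\sup_{\theta\in\mathbb{R}}\|\Re(e^{i\theta}T)\|_2$. *)

theory Defs
  imports "HOL-Analysis.Analysis"
begin

class complex_vector = real_vector +
  fixes scaleC :: "complex \<Rightarrow> 'a \<Rightarrow> 'a"
  assumes scaleC_add_right: "scaleC a (x + y) = scaleC a x + scaleC a y"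
    and scaleC_add_left: "scaleC (a + b) x = scaleC a x + scaleC b x"
    and scaleC_scaleC: "scaleC a (scaleC b x) = scaleC (a * b) x"
    and scaleC_one: "scaleC 1 x = x"
    and scaleR_scaleC: "scaleR r x = scaleC (complex_of_real r) x"

text \<open>Inner product: conjugate-linear in the first, linear in the second argument.\<close>
class complex_inner = complex_vector + real_normed_vector +
  fixes cinner :: "'a \<Rightarrow> 'a \<Rightarrow> complex"
  assumes cinner_conj_commute: "cinner x y = cnj (cinner y x)"
    and cinner_add_right: "cinner x (y + z) = cinner x y + cinner x z"
    and cinner_scaleC_right: "cinner x (scaleC a y) = a * cinner x y"
    and cinner_ge_zero: "0 \<le> Re (cinner x x)"
    and cinner_eq_zero_iff: "cinner x x = 0 \<longleftrightarrow> x = 0"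
    and norm_eq_sqrt_cinner: "norm x = sqrt (Re (cinner x x))"

text \<open>A complex Hilbert space is a type of class \<open>{complex_inner, complete_space}\<close>.\<close>

definition clinear :: "('a::complex_vector \<Rightarrow> 'b::complex_vector) \<Rightarrow> bool" where
  "clinear T \<longleftrightarrow> (\<forall>x y. T (x + y) = T x + T y) \<and> (\<forall>c x. T (scaleC c x) = scaleC c (T x))"

definition bounded_clinear :: "('a::complex_inner \<Rightarrow> 'b::complex_inner) \<Rightarrow> bool" where
  "bounded_clinear T \<longleftrightarrow> clinear T \<and> (\<exists>K. \<forall>x. norm (T x) \<le> K * norm x)"

definition cspan :: "'a::complex_vector set \<Rightarrow> 'a set" where
  "cspan E = {\<Sum>e\<in>F. scaleC (c e) e | F c. finite F \<and> F \<subseteq> E}"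

definition corthonormal :: "'a::complex_inner set \<Rightarrow> bool" where
  "corthonormal E \<longleftrightarrow> (\<forall>e\<in>E. cinner e e = 1) \<and> (\<forall>e\<in>E. \<forall>f\<in>E. e \<noteq> f \<longrightarrow> cinner e f = 0)"

definition is_onb :: "'a::complex_inner set \<Rightarrow> bool" where
  "is_onb E \<longleftrightarrow> corthonormal E \<and> closure (cspan E) = UNIV"

definition adj :: "('a::complex_inner \<Rightarrow> 'a) \<Rightarrow> 'a \<Rightarrow> 'a" where
  "adj T y = (THE z. \<forall>x. cinner (T x) y = cinner x z)"

text \<open>Trace \<open>\<Sum>_i <e_i, A e_i>\<close> with respect to an orthonormal basis (basis-independent for trace class A).\<close>
definition trace :: "('a::complex_inner \<Rightarrow> 'a) \<Rightarrow> complex" where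
  "trace A = infsum (\<lambda>e. cinner e (A e)) (SOME E. is_onb E)"

definition hilbert_schmidt :: "('a::complex_inner \<Rightarrow> 'a) \<Rightarrow> bool" where
  "hilbert_schmidt T \<longleftrightarrow> (\<exists>E. is_onb E \<and> (\<lambda>e. (norm (T e))\<^sup>2) summable_on E)"

definition hs_norm :: "('a::complex_inner \<Rightarrow> 'a) \<Rightarrow> real" where
  "hs_norm T = sqrt (Re (trace (adj T \<circ> T)))"

definition real_part_op :: "('a::complex_inner \<Rightarrow> 'a) \<Rightarrow> 'a \<Rightarrow> 'a" where
  "real_part_op T = (\<lambda>x. scaleC (1/2) (T x + adj T x))"

definition w2 :: "('a::complex_inner \<Rightarrow> 'a) \<Rightarrow> real" where
  "w2 T = (SUP \<theta>::real. hs_norm (real_part_op (\<lambda>x. scaleC (cis \<theta>) (T x))))"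

end

theory Submission
  imports Defs
begin

text \<open>
  Let \<open>S = (e\<^sup>i\<^sup>\<theta> T + e\<^sup>-\<^sup>i\<^sup>\<theta> T\<^sup>*) / 2\<close> be the real part of \<open>e\<^sup>i\<^sup>\<theta> T\<close>.
  Expanding the square gives, for every vector \<open>e\<close>,
  \<open>\<parallel>S e\<parallel>\<^sup>2 = (\<parallel>T e\<parallel>\<^sup>2 + \<parallel>T\<^sup>* e\<parallel>\<^sup>2) / 4 + Re (e\<^sup>2\<^sup>i\<^sup>\<theta> \<langle>e, T\<^sup>2 e\<rangle>) / 2\<close>.
  Summing over an orthonormal basis yields
  \<open>\<parallel>S\<parallel>\<^sub>2\<^sup>2 = (\<parallel>T\<parallel>\<^sub>2\<^sup>2 + \<parallel>T\<^sup>*\<parallel>\<^sub>2\<^sup>2) / 4 + Re (e\<^sup>2\<^sup>i\<^sup>\<theta> tr T\<^sup>2) / 2 \<le> \<parallel>T\<parallel>\<^sub>2\<^sup>2 / 2 + |tr T\<^sup>2| / 2\<close>,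
  because \<open>\<parallel>T\<^sup>*\<parallel>\<^sub>2 \<le> \<parallel>T\<parallel>\<^sub>2\<close> by Parseval and Bessel applied to the double sum
  \<open>\<Sum>\<^sub>e \<Sum>\<^sub>f |\<langle>e, T f\<rangle>|\<^sup>2\<close>; the same double sum shows that summability of \<open>\<parallel>T e\<parallel>\<^sup>2\<close>
  does not depend on the basis.
\<close>

section \<open>Complex inner products\<close>

lemma cinner_add_left: "cinner (x + y) z = cinner x z + cinner y z"
  by (metis cinner_conj_commute cinner_add_right complex_cnj_add)

lemma cinner_scaleC_left: "cinner (scaleC a x) y = cnj a * cinner x y"
  by (metis cinner_conj_commute cinner_scaleC_right complex_cnj_mult)

lemma cinner_zero_right [simp]: "cinner x 0 = 0"
  using cinner_add_right[of x 0 0] by simp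

lemma cinner_zero_left [simp]: "cinner 0 x = 0"
  using cinner_add_left[of 0 0 x] by simp

lemma cinner_minus_right: "cinner x (- y) = - cinner x y"
  using cinner_add_right[of x y "- y"] by (simp add: add_eq_0_iff)

lemma cinner_minus_left: "cinner (- x) y = - cinner x y"
  using cinner_add_left[of x "- x" y] by (simp add: add_eq_0_iff)

lemma cinner_diff_right: "cinner x (y - z) = cinner x y - cinner x z"
  by (simp only: diff_conv_add_uminus cinner_add_right cinner_minus_right)

lemma cinner_diff_left: "cinner (x - y) z = cinner x z - cinner y z"
  by (simp only: diff_conv_add_uminus cinner_add_left cinner_minus_left)

lemma cinner_sum_right: "cinner x (\<Sum>i\<in>I. f i) = (\<Sum>i\<in>I. cinner x (f i))"
  by (induction I rule: infinite_finite_induct) (auto simp: cinner_add_right)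

lemma cinner_sum_left: "cinner (\<Sum>i\<in>I. f i) x = (\<Sum>i\<in>I. cinner (f i) x)"
  by (induction I rule: infinite_finite_induct) (auto simp: cinner_add_left)

lemma cinner_scaleR_right: "cinner x (scaleR r y) = of_real r * cinner x y"
  by (simp add: scaleR_scaleC cinner_scaleC_right)

lemma cinner_scaleR_left: "cinner (scaleR r x) y = of_real r * cinner x y"
  by (simp add: scaleR_scaleC cinner_scaleC_left)

lemma cnj_mult_self: "cnj z * z = of_real ((cmod z)\<^sup>2)"
  by (metis complex_norm_square mult.commute)

lemma cinner_self_real: "cinner x x = of_real ((norm x)\<^sup>2)"
proof -
  have "Im (cinner x x) = 0"
    using arg_cong[OF cinner_conj_commute[of x x], of Im] by simp
  moreover have "Re (cinner x x) = (norm x)\<^sup>2"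
    using cinner_ge_zero[of x] by (simp add: norm_eq_sqrt_cinner)
  ultimately show ?thesis by (simp add: complex_eq_iff)
qed

lemma cinner_eqI:
  assumes "\<And>x. cinner x y = cinner x z"
  shows "y = z"
  using assms[of "y - z"] cinner_eq_zero_iff[of "y - z"] by (simp add: cinner_diff_right)

lemma norm_scaleC: "norm (scaleC c (x::'a::complex_inner)) = cmod c * norm x"
proof -
  have "complex_of_real ((norm (scaleC c x))\<^sup>2) = cinner (scaleC c x) (scaleC c x)"
    by (rule cinner_self_real[symmetric])
  also have "\<dots> = (cnj c * c) * cinner x x"
    by (simp add: cinner_scaleC_left cinner_scaleC_right)
  also have "\<dots> = complex_of_real ((cmod c * norm x)\<^sup>2)"
    by (simp add: cnj_mult_self cinner_self_real power_mult_distrib)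
  finally have "(norm (scaleC c x))\<^sup>2 = (cmod c * norm x)\<^sup>2"
    by (simp only: of_real_eq_iff)
  then show ?thesis
    by (simp add: power2_eq_iff_nonneg)
qed

lemma norm_add_square: "(norm (x + y))\<^sup>2 = (norm x)\<^sup>2 + (norm y)\<^sup>2 + 2 * Re (cinner x y)"
proof -
  have "cinner (x + y) (x + y) = cinner x x + cinner y y + (cinner x y + cnj (cinner x y))"
    by (simp add: cinner_add_left cinner_add_right cinner_conj_commute[of y x])
  then have "complex_of_real ((norm (x + y))\<^sup>2) = of_real ((norm x)\<^sup>2 + (norm y)\<^sup>2 + 2 * Re (cinner x y))"
    by (simp add: cinner_self_real complex_add_cnj)
  then show ?thesis
    using of_real_eq_iff by blast
qed

lemma Re_cinner_le_half_sum_squares: "Re (cinner x y) \<le> ((norm x)\<^sup>2 + (norm y)\<^sup>2) / 2"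
  using norm_add_square[of x "- y"] zero_le_power2[of "norm (x - y)"]
  by (simp add: cinner_minus_right)

lemma cmod_cinner_le_half_sum_squares: "cmod (cinner x y) \<le> ((norm x)\<^sup>2 + (norm y)\<^sup>2) / 2"
proof (cases "cinner x y = 0")
  case True
  then show ?thesis by simp
next
  case False
  \<comment> \<open>rotate \<open>y\<close> so that the inner product becomes real and nonnegative\<close>
  define u where "u = cnj (cinner x y) / cmod (cinner x y)"
  have "cinner x (scaleC u y) = (cnj (cinner x y) * cinner x y) / cmod (cinner x y)"
    by (simp add: u_def cinner_scaleC_right)
  also have "\<dots> = of_real (cmod (cinner x y))"
    using False by (simp add: cnj_mult_self power2_eq_square)
  finally have "cmod (cinner x y) = Re (cinner x (scaleC u y))"
    by simp
  also have "\<dots> \<le> ((norm x)\<^sup>2 + (norm (scaleC u y))\<^sup>2) / 2"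
    by (rule Re_cinner_le_half_sum_squares)
  also have "norm (scaleC u y) = norm y"
    using False by (simp add: u_def norm_scaleC norm_divide)
  finally show ?thesis .
qed

lemma cmod_cinner_le: "cmod (cinner x y) \<le> norm x * norm y"
proof (cases "x = 0 \<or> y = 0")
  case True
  then show ?thesis by auto
next
  case False
  then have nx: "norm x > 0" and ny: "norm y > 0"
    by auto
  define x' where "x' = scaleC (1 / of_real (norm x)) x"
  define y' where "y' = scaleC (1 / of_real (norm y)) y"
  have "cinner x y = of_real (norm x * norm y) * cinner x' y'"
    using nx ny by (simp add: x'_def y'_def cinner_scaleC_left cinner_scaleC_right)
  moreover have "cmod (cinner x' y') \<le> 1"
    using cmod_cinner_le_half_sum_squares[of x' y'] nx ny
    by (simp add: x'_def y'_def norm_scaleC norm_divide)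
  ultimately show ?thesis
    using nx ny by (simp add: norm_mult mult_left_le)
qed

lemma bounded_linear_cinner_right: "bounded_linear (cinner x)"
proof (rule bounded_linear_intro[where K = "norm x"])
  show "cmod (cinner x y) \<le> norm y * norm x" for y
    using cmod_cinner_le[of x y] by (simp add: mult.commute)
qed (simp_all add: cinner_add_right cinner_scaleR_right scaleR_conv_of_real)

lemma bounded_linear_cinner_left: "bounded_linear (\<lambda>y. cinner y x)"
  by (rule bounded_linear_intro[where K = "norm x"])
    (simp_all add: cinner_add_left cinner_scaleR_left scaleR_conv_of_real cmod_cinner_le)

lemma bounded_clinear_scaleC:
  "bounded_clinear T \<Longrightarrow> T (scaleC c x) = scaleC c (T x)"
  unfolding bounded_clinear_def clinear_def by blast

lemma bounded_clinear_bounded_linear: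
  assumes "bounded_clinear T"
  shows "bounded_linear T"
proof -
  from assms obtain K where "\<And>x. norm (T x) \<le> K * norm x" and "clinear T"
    unfolding bounded_clinear_def by blast
  then show ?thesis
    by (intro bounded_linear_intro[where K = K]) (auto simp: clinear_def scaleR_scaleC mult.commute)
qed

section \<open>Orthonormal sets\<close>

lemma cinner_orthonormal_comb:
  assumes "corthonormal E" "finite F" "F \<subseteq> E" "f \<in> E"
  shows "cinner f (\<Sum>e\<in>F. scaleC (c e) e) = (if f \<in> F then c f else 0)"
proof -
  have "cinner f (\<Sum>e\<in>F. scaleC (c e) e) = (\<Sum>e\<in>F. c e * cinner f e)"
    by (simp add: cinner_sum_right cinner_scaleC_right)
  also have "\<dots> = (\<Sum>e\<in>F. if f = e then c e else 0)"
    using assms by (intro sum.cong) (auto simp: corthonormal_def)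
  finally show ?thesis
    using assms(2) by simp
qed

lemma norm_orthonormal_comb_square:
  assumes "corthonormal E" "finite F" "F \<subseteq> E"
  shows "(norm (\<Sum>e\<in>F. scaleC (c e) e))\<^sup>2 = (\<Sum>e\<in>F. (cmod (c e))\<^sup>2)"
proof -
  let ?x = "\<Sum>e\<in>F. scaleC (c e) e"
  have "cinner ?x ?x = (\<Sum>f\<in>F. cnj (c f) * cinner f ?x)"
    by (simp add: cinner_sum_left cinner_scaleC_left)
  also have "\<dots> = (\<Sum>f\<in>F. of_real ((cmod (c f))\<^sup>2))"
  proof (rule sum.cong)
    fix f
    assume "f \<in> F"
    moreover from this assms(3) have "f \<in> E"
      by blast
    ultimately show "cnj (c f) * cinner f ?x = of_real ((cmod (c f))\<^sup>2)"
      by (simp add: cinner_orthonormal_comb[OF assms] cnj_mult_self)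
  qed simp
  finally have "complex_of_real ((norm ?x)\<^sup>2) = complex_of_real (\<Sum>f\<in>F. (cmod (c f))\<^sup>2)"
    by (simp only: cinner_self_real of_real_sum)
  then show ?thesis
    using of_real_eq_iff by blast
qed

lemma bessel_inequality_finite:
  assumes "corthonormal E" "finite F" "F \<subseteq> E"
  shows "(\<Sum>e\<in>F. (cmod (cinner e x))\<^sup>2) \<le> (norm x)\<^sup>2"
proof -
  define p where "p = (\<Sum>e\<in>F. scaleC (cinner e x) e)"
  define s where "s = (\<Sum>e\<in>F. (cmod (cinner e x))\<^sup>2)"
  have pp: "cinner p p = of_real s"
    unfolding p_def s_def by (simp add: cinner_self_real norm_orthonormal_comb_square[OF assms])
  have "cinner p x = (\<Sum>e\<in>F. cnj (cinner e x) * cinner e x)"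
    unfolding p_def by (simp add: cinner_sum_left cinner_scaleC_left)
  then have px: "cinner p x = of_real s"
    by (simp add: s_def cnj_mult_self)
  then have xp: "cinner x p = of_real s"
    by (metis cinner_conj_commute complex_cnj_complex_of_real)
  have "cinner (x - p) (x - p) = cinner x x - of_real s"
    by (simp add: cinner_diff_left cinner_diff_right pp px xp)
  then have "complex_of_real ((norm (x - p))\<^sup>2) = complex_of_real ((norm x)\<^sup>2 - s)"
    by (simp only: cinner_self_real of_real_diff)
  then have "(norm (x - p))\<^sup>2 = (norm x)\<^sup>2 - s"
    using of_real_eq_iff by blast
  then show ?thesis
    unfolding s_def by (metis zero_le_power2 diff_ge_0_iff_ge)
qed

lemma bessel_inequality:
  assumes "corthonormal E"
  shows "(\<lambda>e. (cmod (cinner e x))\<^sup>2) summable_on E"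
    and "infsum (\<lambda>e. (cmod (cinner e x))\<^sup>2) E \<le> (norm x)\<^sup>2"
proof -
  show summable: "(\<lambda>e. (cmod (cinner e x))\<^sup>2) summable_on E"
    using bessel_inequality_finite[OF assms]
    by (intro nonneg_bdd_above_summable_on bdd_aboveI[where M = "(norm x)\<^sup>2"]) auto
  show "infsum (\<lambda>e. (cmod (cinner e x))\<^sup>2) E \<le> (norm x)\<^sup>2"
    using bessel_inequality_finite[OF assms] by (intro infsum_le_finite_sums[OF summable]) auto
qed

lemma summable_on_Cauchy:
  fixes f :: "'i \<Rightarrow> 'a::{real_normed_vector, complete_space}"
  assumes "\<And>\<epsilon>. \<epsilon> > 0 \<Longrightarrow> \<exists>F. finite F \<and> F \<subseteq> A \<and>
             (\<forall>G. finite G \<and> G \<subseteq> A - F \<longrightarrow> norm (sum f G) < \<epsilon>)"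
  shows "f summable_on A"
proof -
  have "\<exists>P. eventually P (finite_subsets_at_top A) \<and>
          (\<forall>F1 F2. P F1 \<and> P F2 \<longrightarrow> dist (sum f F1) (sum f F2) < \<epsilon>)" if "\<epsilon> > 0" for \<epsilon>
  proof -
    obtain F where F: "finite F" "F \<subseteq> A"
      and small: "\<And>G. finite G \<Longrightarrow> G \<subseteq> A - F \<Longrightarrow> norm (sum f G) < \<epsilon> / 2"
      using assms[of "\<epsilon> / 2"] \<open>\<epsilon> > 0\<close> by auto
    define P where "P G \<longleftrightarrow> finite G \<and> F \<subseteq> G \<and> G \<subseteq> A" for G
    have "eventually P (finite_subsets_at_top A)"
      unfolding P_def eventually_finite_subsets_at_top using F by blast
    moreover have "dist (sum f F1) (sum f F2) < \<epsilon>" if "P F1" "P F2" for F1 F2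
    proof -
      have split: "sum f G = sum f F + sum f (G - F)" if "P G" for G
        using that sum.subset_diff[of F G f] by (simp add: P_def add.commute)
      have "dist (sum f F1) (sum f F2) = norm (sum f (F1 - F) - sum f (F2 - F))"
        by (simp add: dist_norm split[OF \<open>P F1\<close>] split[OF \<open>P F2\<close>])
      also have "\<dots> \<le> norm (sum f (F1 - F)) + norm (sum f (F2 - F))"
        by (rule norm_triangle_ineq4)
      also have "\<dots> < \<epsilon> / 2 + \<epsilon> / 2"
        using that by (intro add_strict_mono small) (auto simp: P_def)
      finally show ?thesis
        by simp
    qed
    ultimately show ?thesis
      by blast
  qed
  then have "cauchy_filter (filtermap (sum f) (finite_subsets_at_top A))"
    by (simp add: cauchy_filter_metric_filtermap)
  moreover have "complete (UNIV :: 'a set)"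
    by (meson Cauchy_convergent UNIV_I complete_def convergent_def)
  ultimately obtain s where "(sum f \<longlongrightarrow> s) (finite_subsets_at_top A)"
    using complete_uniform[where S = UNIV] by (force simp: filterlim_def)
  then show ?thesis
    unfolding summable_on_def has_sum_def by blast
qed

lemma summable_on_square_dominated:
  fixes f :: "'i \<Rightarrow> 'a::{real_normed_vector, complete_space}"
  assumes g: "g summable_on A" and g_nonneg: "\<And>x. x \<in> A \<Longrightarrow> 0 \<le> g x"
    and dominated: "\<And>F. finite F \<Longrightarrow> F \<subseteq> A \<Longrightarrow> (norm (sum f F))\<^sup>2 \<le> sum g F"
  shows "f summable_on A"
proof (rule summable_on_Cauchy)
  fix \<epsilon> :: real
  assume "\<epsilon> > 0"
  then obtain F where F: "finite F" "F \<subseteq> A" and close: "dist (sum g F) (infsum g A) \<le> \<epsilon>\<^sup>2 / 2"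
    using infsum_finite_approximation[OF g, of "\<epsilon>\<^sup>2 / 2"] by auto
  have "norm (sum f G) < \<epsilon>" if G: "finite G" "G \<subseteq> A - F" for G
  proof -
    have "sum g F + sum g G = sum g (F \<union> G)"
      using F G by (subst sum.union_disjoint) auto
    also have "\<dots> \<le> infsum g A"
      using F G g_nonneg by (intro finite_sum_le_infsum g) auto
    finally have "sum g G \<le> infsum g A - sum g F"
      by simp
    moreover have "infsum g A - sum g F \<le> \<epsilon>\<^sup>2 / 2"
      using close unfolding dist_real_def by arith
    moreover have "(norm (sum f G))\<^sup>2 \<le> sum g G"
      using G by (intro dominated) auto
    ultimately have "(norm (sum f G))\<^sup>2 < \<epsilon>\<^sup>2"
      using zero_less_power[OF \<open>\<epsilon> > 0\<close>, of 2] by linarith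
    then show ?thesis
      using \<open>\<epsilon> > 0\<close> by (simp add: power_less_imp_less_base)
  qed
  with F show "\<exists>F. finite F \<and> F \<subseteq> A \<and> (\<forall>G. finite G \<and> G \<subseteq> A - F \<longrightarrow> norm (sum f G) < \<epsilon>)"
    by blast
qed

lemma orthonormal_comb_summable:
  fixes c :: "'a::{complex_inner, complete_space} \<Rightarrow> complex"
  assumes "corthonormal E" "(\<lambda>e. (cmod (c e))\<^sup>2) summable_on E"
  shows "(\<lambda>e. scaleC (c e) e) summable_on E"
  using assms(2) by (rule summable_on_square_dominated) (auto simp: norm_orthonormal_comb_square[OF assms(1)])

lemma onb_expansion:
  fixes x :: "'a::{complex_inner, complete_space}"
  assumes "is_onb E"
  shows "((\<lambda>e. scaleC (cinner e x) e) has_sum x) E"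
proof -
  have orth: "corthonormal E"
    using assms by (simp add: is_onb_def)
  obtain y where y: "((\<lambda>e. scaleC (cinner e x) e) has_sum y) E"
    using orthonormal_comb_summable[OF orth bessel_inequality(1)[OF orth]] by (auto simp: summable_on_def)
  have orth_diff: "cinner f (x - y) = 0" if "f \<in> E" for f
  proof -
    have "((\<lambda>e. cinner f (scaleC (cinner e x) e)) has_sum cinner f y) E"
      by (rule has_sum_bounded_linear[OF bounded_linear_cinner_right y])
    moreover have "((\<lambda>e. cinner f (scaleC (cinner e x) e)) has_sum cinner f x) E"
      using orth that
      by (intro has_sum_finite_neutralI[where B = "{f}"]) (auto simp: cinner_scaleC_right corthonormal_def)
    ultimately show ?thesis
      by (simp add: cinner_diff_right has_sum_unique)
  qed
  have "cspan E \<subseteq> {z. cinner z (x - y) = 0}"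
  proof
    fix z
    assume "z \<in> cspan E"
    then obtain F c where z: "z = (\<Sum>e\<in>F. scaleC (c e) e)" and F: "\<And>e. e \<in> F \<Longrightarrow> e \<in> E"
      unfolding cspan_def by blast
    have "cinner z (x - y) = (\<Sum>e\<in>F. cnj (c e) * cinner e (x - y))"
      by (simp add: z cinner_sum_left cinner_scaleC_left)
    also have "\<dots> = 0"
      by (intro sum.neutral ballI) (simp add: F orth_diff)
    finally show "z \<in> {z. cinner z (x - y) = 0}"
      by simp
  qed
  moreover have "closed {z. cinner z (x - y) = 0}"
    by (intro closed_Collect_eq linear_continuous_on bounded_linear_cinner_left continuous_on_const)
  ultimately have "closure (cspan E) \<subseteq> {z. cinner z (x - y) = 0}"
    by (rule closure_minimal)
  then have "cinner (x - y) (x - y) = 0"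
    using assms by (auto simp: is_onb_def)
  with y show ?thesis
    by (simp add: cinner_eq_zero_iff)
qed

lemma parseval:
  fixes x :: "'a::{complex_inner, complete_space}"
  assumes "is_onb E"
  shows "((\<lambda>e. (cmod (cinner e x))\<^sup>2) has_sum (norm x)\<^sup>2) E"
proof -
  have "((\<lambda>e. cinner x (scaleC (cinner e x) e)) has_sum cinner x x) E"
    by (rule has_sum_bounded_linear[OF bounded_linear_cinner_right onb_expansion[OF assms]])
  then have "((\<lambda>e. Re (cinner x (scaleC (cinner e x) e))) has_sum Re (cinner x x)) E"
    by (rule has_sum_Re)
  moreover have "cinner x (scaleC (cinner e x) e) = of_real ((cmod (cinner e x))\<^sup>2)" for e
    by (simp add: cinner_scaleC_right cinner_conj_commute[of x e] complex_norm_square[symmetric])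
  ultimately show ?thesis
    by (simp add: cinner_self_real)
qed

section \<open>Adjoints and Hilbert--Schmidt sums\<close>

lemma adj_eqI:
  assumes "\<And>x. cinner (T x) y = cinner x z"
  shows "adj T y = z"
  unfolding adj_def
proof (rule the_equality)
  show "\<forall>x. cinner (T x) y = cinner x z"
    using assms by blast
next
  fix z'
  assume "\<forall>x. cinner (T x) y = cinner x z'"
  then show "z' = z"
    using assms by (intro cinner_eqI) metis
qed

lemma cinner_adjoint_swap:
  assumes "\<And>x y. cinner (A x) y = cinner x (B y)"
  shows "cinner (B x) y = cinner x (A y)"
  by (metis assms cinner_conj_commute)

lemma cinner_adj_hilbert_schmidt:
  fixes T :: "'a::{complex_inner, complete_space} \<Rightarrow> 'a"
  assumes T: "bounded_clinear T" and E: "is_onb E"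
    and hs: "(\<lambda>e. (norm (T e))\<^sup>2) summable_on E"
  shows "cinner (T x) y = cinner x (adj T y)"
proof -
  \<comment> \<open>\<open>adj T y = (\<Sum>e\<in>E. \<langle>T e, y\<rangle> e)\<close>, which converges since \<open>|\<langle>T e, y\<rangle>| \<le> \<parallel>T e\<parallel> \<parallel>y\<parallel>\<close>\<close>
  have orth: "corthonormal E"
    using E by (simp add: is_onb_def)
  define c where "c e = cinner (T e) y" for e
  have "(\<lambda>e. (cmod (c e))\<^sup>2) summable_on E"
  proof (rule summable_on_comparison_test)
    show "(\<lambda>e. (norm y)\<^sup>2 * (norm (T e))\<^sup>2) summable_on E"
      by (rule summable_on_cmult_right[OF hs])
    show "(cmod (c e))\<^sup>2 \<le> (norm y)\<^sup>2 * (norm (T e))\<^sup>2" for e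
      using power_mono[OF cmod_cinner_le[of "T e" y], of 2]
      by (simp add: c_def power_mult_distrib mult.commute)
  qed simp
  then obtain z where z: "((\<lambda>e. scaleC (c e) e) has_sum z) E"
    using orthonormal_comb_summable[OF orth] by (auto simp: summable_on_def)
  have "cinner (T x) y = cinner x z" for x
  proof -
    have "((\<lambda>e. T (scaleC (cinner e x) e)) has_sum T x) E"
      by (rule has_sum_bounded_linear[OF bounded_clinear_bounded_linear[OF T] onb_expansion[OF E]])
    then have "((\<lambda>e. cinner (scaleC (cinner e x) (T e)) y) has_sum cinner (T x) y) E"
      by (intro has_sum_bounded_linear[OF bounded_linear_cinner_left])
        (simp add: bounded_clinear_scaleC[OF T])
    moreover have "((\<lambda>e. cinner x (scaleC (c e) e)) has_sum cinner x z) E"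
      by (rule has_sum_bounded_linear[OF bounded_linear_cinner_right z])
    ultimately show ?thesis
      by (simp add: cinner_scaleC_left cinner_scaleC_right c_def cinner_conj_commute[of _ x]
          has_sum_unique mult.commute)
  qed
  moreover from this have "adj T y = z"
    by (rule adj_eqI)
  ultimately show ?thesis
    by simp
qed

lemma has_sum_sum:
  fixes f :: "'i \<Rightarrow> 'b \<Rightarrow> 'c::topological_comm_monoid_add"
  assumes "finite I" "\<And>i. i \<in> I \<Longrightarrow> (f i has_sum s i) A"
  shows "((\<lambda>x. \<Sum>i\<in>I. f i x) has_sum (\<Sum>i\<in>I. s i)) A"
  using assms by (induction I rule: finite_induct) (auto intro: has_sum_add)

lemma hilbert_schmidt_sum_adjoint_le:
  fixes A B :: "'a::{complex_inner, complete_space} \<Rightarrow> 'a"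
  assumes orth: "corthonormal E" and onb: "is_onb E'"
    and adjoint: "\<And>x y. cinner (A x) y = cinner x (B y)"
    and summable_B: "(\<lambda>f. (norm (B f))\<^sup>2) summable_on E'"
  shows "(\<lambda>e. (norm (A e))\<^sup>2) summable_on E"
    and "infsum (\<lambda>e. (norm (A e))\<^sup>2) E \<le> infsum (\<lambda>f. (norm (B f))\<^sup>2) E'"
proof -
  \<comment> \<open>Parseval in \<open>E'\<close>, then Bessel in \<open>E\<close>: \<open>\<Sum>\<^sub>e \<parallel>A e\<parallel>\<^sup>2 = \<Sum>\<^sub>f \<Sum>\<^sub>e |\<langle>f, A e\<rangle>|\<^sup>2 = \<Sum>\<^sub>f \<Sum>\<^sub>e |\<langle>e, B f\<rangle>|\<^sup>2 \<le> \<Sum>\<^sub>f \<parallel>B f\<parallel>\<^sup>2\<close>\<close>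
  have partial_sums: "(\<Sum>e\<in>F. (norm (A e))\<^sup>2) \<le> infsum (\<lambda>f. (norm (B f))\<^sup>2) E'"
    if F: "finite F" "F \<subseteq> E" for F
  proof (rule has_sum_mono)
    show "((\<lambda>f. \<Sum>e\<in>F. (cmod (cinner f (A e)))\<^sup>2) has_sum (\<Sum>e\<in>F. (norm (A e))\<^sup>2)) E'"
      using F(1) by (intro has_sum_sum parseval[OF onb])
    show "((\<lambda>f. (norm (B f))\<^sup>2) has_sum infsum (\<lambda>f. (norm (B f))\<^sup>2) E') E'"
      using summable_B by simp
    have "cmod (cinner f (A e)) = cmod (cinner e (B f))" for e f
      by (metis adjoint cinner_conj_commute complex_mod_cnj)
    then show "(\<Sum>e\<in>F. (cmod (cinner f (A e)))\<^sup>2) \<le> (norm (B f))\<^sup>2" for f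
      using bessel_inequality_finite[OF orth F] by simp
  qed
  show summable: "(\<lambda>e. (norm (A e))\<^sup>2) summable_on E"
    using partial_sums
    by (intro nonneg_bdd_above_summable_on bdd_aboveI[where M = "infsum (\<lambda>f. (norm (B f))\<^sup>2) E'"]) auto
  show "infsum (\<lambda>e. (norm (A e))\<^sup>2) E \<le> infsum (\<lambda>f. (norm (B f))\<^sup>2) E'"
    using partial_sums by (intro infsum_le_finite_sums[OF summable]) auto
qed

section \<open>The Hilbert--Schmidt norm of a real part\<close>

definition trace_onb :: "'a::complex_inner set" where
  "trace_onb = (SOME E. is_onb E)"

lemma trace_eq_infsum: "trace A = infsum (\<lambda>e. cinner e (A e)) trace_onb"
  unfolding trace_def trace_onb_def ..

lemma is_onb_trace_onb: "is_onb (E :: 'a::complex_inner set) \<Longrightarrow> is_onb (trace_onb :: 'a set)"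
  unfolding trace_onb_def by (rule someI[of is_onb])

lemma infsum_complex_of_real: "infsum (\<lambda>x. complex_of_real (f x)) A = of_real (infsum f A)"
proof (rule infsum_bounded_linear_strong[OF _ bounded_linear_of_real])
  show "(\<lambda>x. complex_of_real (f x)) summable_on A \<longleftrightarrow> f summable_on A"
    using summable_on_of_real summable_on_Re[of "\<lambda>x. complex_of_real (f x)"] by auto
qed

lemma hs_norm_square:
  assumes "\<And>x y. cinner (S x) y = cinner x (S' y)"
  shows "0 \<le> hs_norm S"
    and "(hs_norm S)\<^sup>2 = infsum (\<lambda>e. (norm (S e))\<^sup>2) trace_onb"
proof -
  have "adj S = S'"
    using assms by (intro ext adj_eqI) simp
  then have "trace (adj S \<circ> S) = infsum (\<lambda>e. cinner (S e) (S e)) trace_onb"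
    by (simp add: trace_eq_infsum assms)
  also have "\<dots> = of_real (infsum (\<lambda>e. (norm (S e))\<^sup>2) trace_onb)"
    unfolding cinner_self_real by (rule infsum_complex_of_real)
  finally have "trace (adj S \<circ> S) = of_real (infsum (\<lambda>e. (norm (S e))\<^sup>2) trace_onb)" .
  moreover have "0 \<le> infsum (\<lambda>e. (norm (S e))\<^sup>2) trace_onb"
    by (simp add: infsum_nonneg)
  ultimately show "0 \<le> hs_norm S" "(hs_norm S)\<^sup>2 = infsum (\<lambda>e. (norm (S e))\<^sup>2) trace_onb"
    by (simp_all add: hs_norm_def)
qed

lemma real_part_op_eq:
  assumes "\<And>x y. cinner (A x) y = cinner x (B y)"
  shows "real_part_op A x = scaleC (1/2) (A x + B x)"
proof -
  have "adj A = B"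
    using assms by (intro ext adj_eqI) simp
  then show ?thesis
    by (simp add: real_part_op_def)
qed

lemma cinner_real_part_op_self_adjoint:
  assumes "\<And>x y. cinner (A x) y = cinner x (B y)"
  shows "cinner (real_part_op A x) y = cinner x (real_part_op A y)"
  using assms cinner_adjoint_swap[of A B, OF assms]
  by (simp add: real_part_op_eq[OF assms] cinner_scaleC_left cinner_scaleC_right
      cinner_add_left cinner_add_right add.commute)

lemma norm_real_part_op_square:
  assumes adjoint: "\<And>x y. cinner (A x) y = cinner x (B y)"
  shows "(norm (real_part_op A x))\<^sup>2
           = ((norm (A x))\<^sup>2 + (norm (B x))\<^sup>2) / 4 + Re (cinner x (A (A x))) / 2"
proof -
  have "(norm (real_part_op A x))\<^sup>2 = (norm (A x + B x))\<^sup>2 / 4"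
    by (simp add: real_part_op_eq[OF adjoint] norm_scaleC power_mult_distrib power_divide)
  moreover have "Re (cinner (A x) (B x)) = Re (cinner x (A (A x)))"
    using cinner_adjoint_swap[of A B, OF adjoint, of x "A x"] cinner_conj_commute[of "A x" "B x"]
    by simp
  ultimately show ?thesis
    using norm_add_square[of "A x" "B x"] by (simp add: field_simps)
qed

lemma summable_cinner_square:
  assumes adjoint: "\<And>x y. cinner (A x) y = cinner x (B y)"
    and summable_A: "(\<lambda>e. (norm (A e))\<^sup>2) summable_on E"
    and summable_B: "(\<lambda>e. (norm (B e))\<^sup>2) summable_on E"
  shows "(\<lambda>e. cinner e (A (A e))) summable_on E"
proof (rule abs_summable_summable, rule summable_on_comparison_test)
  show "(\<lambda>e. ((norm (B e))\<^sup>2 + (norm (A e))\<^sup>2) / 2) summable_on E"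
    using summable_on_cmult_left[OF summable_on_add[OF summable_B summable_A], of "1/2"] by simp
  show "norm (cinner e (A (A e))) \<le> ((norm (B e))\<^sup>2 + (norm (A e))\<^sup>2) / 2" for e
    using cmod_cinner_le_half_sum_squares[of "B e" "A e"] cinner_adjoint_swap[OF adjoint, of e "A e"]
    by simp
qed simp

lemma hs_norm_real_part_op_square:
  assumes adjoint: "\<And>x y. cinner (A x) y = cinner x (B y)"
    and summable_A: "(\<lambda>e. (norm (A e))\<^sup>2) summable_on trace_onb"
    and summable_B: "(\<lambda>e. (norm (B e))\<^sup>2) summable_on trace_onb"
  shows "(hs_norm (real_part_op A))\<^sup>2
           = (infsum (\<lambda>e. (norm (A e))\<^sup>2) trace_onb + infsum (\<lambda>e. (norm (B e))\<^sup>2) trace_onb) / 4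
             + Re (trace (A \<circ> A)) / 2"
proof -
  have "((\<lambda>e. Re (cinner e (A (A e)))) has_sum Re (trace (A \<circ> A))) trace_onb"
    using summable_cinner_square[OF assms] by (simp add: trace_eq_infsum has_sum_Re)
  then have "((\<lambda>e. ((norm (A e))\<^sup>2 + (norm (B e))\<^sup>2) * (1/4) + Re (cinner e (A (A e))) * (1/2))
      has_sum (infsum (\<lambda>e. (norm (A e))\<^sup>2) trace_onb + infsum (\<lambda>e. (norm (B e))\<^sup>2) trace_onb) * (1/4)
        + Re (trace (A \<circ> A)) * (1/2)) trace_onb"
    using summable_A summable_B by (intro has_sum_add has_sum_cmult_left) simp_all
  then have "((\<lambda>e. (norm (real_part_op A e))\<^sup>2) has_sum
      (infsum (\<lambda>e. (norm (A e))\<^sup>2) trace_onb + infsum (\<lambda>e. (norm (B e))\<^sup>2) trace_onb) / 4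
        + Re (trace (A \<circ> A)) / 2) trace_onb"
    by (simp add: norm_real_part_op_square[OF adjoint])
  then show ?thesis
    using hs_norm_square(2)[OF cinner_real_part_op_self_adjoint[OF adjoint]] by (simp add: infsumI)
qed

lemma hs_norm_real_part_rotation:
  fixes T T' :: "'a::complex_inner \<Rightarrow> 'a" and \<theta> :: real
  assumes adjoint: "\<And>x y. cinner (T x) y = cinner x (T' y)"
    and linear: "\<And>c x. T (scaleC c x) = scaleC c (T x)"
    and summable_T: "(\<lambda>e. (norm (T e))\<^sup>2) summable_on trace_onb"
    and summable_T': "(\<lambda>e. (norm (T' e))\<^sup>2) summable_on trace_onb"
    and adjoint_le: "infsum (\<lambda>e. (norm (T' e))\<^sup>2) trace_onb \<le> infsum (\<lambda>e. (norm (T e))\<^sup>2) trace_onb"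
  defines "R \<equiv> real_part_op (\<lambda>x. scaleC (cis \<theta>) (T x))"
  shows "0 \<le> hs_norm R"
    and "(hs_norm R)\<^sup>2 \<le> infsum (\<lambda>e. (norm (T e))\<^sup>2) trace_onb / 2 + cmod (trace (T \<circ> T)) / 2"
proof -
  define A where "A = (\<lambda>x. scaleC (cis \<theta>) (T x))"
  define B where "B = (\<lambda>y. scaleC (cnj (cis \<theta>)) (T' y))"
  have adjoint_AB: "cinner (A x) y = cinner x (B y)" for x y
    by (simp add: A_def B_def cinner_scaleC_left cinner_scaleC_right adjoint)
  have R: "R = real_part_op A"
    by (simp add: R_def A_def)
  have norm_A: "norm (A x) = norm (T x)" and norm_B: "norm (B x) = norm (T' x)" for x
    by (simp_all add: A_def B_def norm_scaleC)
  show "0 \<le> hs_norm R"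
    unfolding R by (rule hs_norm_square(1)[OF cinner_real_part_op_self_adjoint[OF adjoint_AB]])
  have "trace (A \<circ> A) = cis \<theta> * cis \<theta> * trace (T \<circ> T)"
    by (simp add: trace_eq_infsum A_def linear cinner_scaleC_right infsum_cmult_right' mult.assoc)
  then have "Re (trace (A \<circ> A)) \<le> cmod (cis \<theta> * cis \<theta> * trace (T \<circ> T))"
    by (metis complex_Re_le_cmod)
  also have "\<dots> = cmod (trace (T \<circ> T))"
    by (simp add: norm_mult)
  finally have "Re (trace (A \<circ> A)) \<le> cmod (trace (T \<circ> T))" .
  moreover have "(hs_norm R)\<^sup>2
      = (infsum (\<lambda>e. (norm (T e))\<^sup>2) trace_onb + infsum (\<lambda>e. (norm (T' e))\<^sup>2) trace_onb) / 4
        + Re (trace (A \<circ> A)) / 2"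
    unfolding R using hs_norm_real_part_op_square[OF adjoint_AB] summable_T summable_T'
    by (simp add: norm_A norm_B)
  ultimately show "(hs_norm R)\<^sup>2 \<le> infsum (\<lambda>e. (norm (T e))\<^sup>2) trace_onb / 2 + cmod (trace (T \<circ> T)) / 2"
    using adjoint_le by (simp add: field_simps)
qed

lemma SUP_square_le:
  fixes f :: "'b \<Rightarrow> real"
  assumes nonneg: "\<And>x. 0 \<le> f x" and bound: "\<And>x. (f x)\<^sup>2 \<le> c"
  shows "(SUP x. f x)\<^sup>2 \<le> c"
proof -
  have le_sqrt: "f x \<le> sqrt c" for x
    using bound by (rule real_le_rsqrt)
  have "0 \<le> (SUP x. f x)"
    using nonneg le_sqrt by (meson UNIV_I bdd_aboveI2 cSUP_upper order_trans)
  moreover have "(SUP x. f x) \<le> sqrt c"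
    using le_sqrt by (intro cSUP_least) auto
  ultimately have "(SUP x. f x)\<^sup>2 \<le> (sqrt c)\<^sup>2"
    by (rule power_mono[rotated])
  also have "\<dots> = c"
    using order_trans[OF zero_le_power2 bound] by simp
  finally show ?thesis .
qed

theorem corollary3p5:
  fixes T :: "'a::{complex_inner, complete_space} \<Rightarrow> 'a"
  assumes "bounded_clinear T"
    and "hilbert_schmidt T"
  shows "(w2 T)\<^sup>2 \<le> 1/2 * (hs_norm T)\<^sup>2 + 1/2 * cmod (trace (T \<circ> T))"
proof -
  obtain E where E: "is_onb E" and summable_E: "(\<lambda>e. (norm (T e))\<^sup>2) summable_on E"
    using assms(2) unfolding hilbert_schmidt_def by blast
  have onb: "is_onb (trace_onb :: 'a set)"
    using E by (rule is_onb_trace_onb)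
  have orth_E: "corthonormal E" and orth: "corthonormal (trace_onb :: 'a set)"
    using E onb by (auto simp: is_onb_def)
  define T' where "T' = adj T"
  have adjoint: "cinner (T x) y = cinner x (T' y)" for x y
    unfolding T'_def using assms(1) E summable_E by (rule cinner_adj_hilbert_schmidt)
  have adjoint': "cinner (T' x) y = cinner x (T y)" for x y
    using adjoint by (rule cinner_adjoint_swap)
  have "(\<lambda>e. (norm (T' e))\<^sup>2) summable_on E"
    by (rule hilbert_schmidt_sum_adjoint_le(1)[OF orth_E E adjoint' summable_E])
  then have summable_T: "(\<lambda>e. (norm (T e))\<^sup>2) summable_on trace_onb"
    by (rule hilbert_schmidt_sum_adjoint_le(1)[OF orth E adjoint])
  note adjoint_bound = hilbert_schmidt_sum_adjoint_le[OF orth onb adjoint' summable_T]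
  have "(hs_norm (real_part_op (\<lambda>x. scaleC (cis \<theta>) (T x))))\<^sup>2
      \<le> 1/2 * (hs_norm T)\<^sup>2 + 1/2 * cmod (trace (T \<circ> T))" for \<theta>
    using hs_norm_real_part_rotation(2)[OF adjoint _ summable_T adjoint_bound]
      bounded_clinear_scaleC[OF assms(1)] hs_norm_square(2)[OF adjoint] by simp
  then show ?thesis
    unfolding w2_def
    using hs_norm_real_part_rotation(1)[OF adjoint _ summable_T adjoint_bound]
      bounded_clinear_scaleC[OF assms(1)] by (intro SUP_square_le) auto
qed

end
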